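(* In the $1/4$-rebate Marshallian Match, for every feasible bidder–asker pair $(i,j)$ and every strategy profile $(b,a)$, in every realization, $$u_i(b_{-i},a_{-j},b_i',a_j')+u_j(b_{-i},a_{-j},b_i',a_j')\;\ge\;\frac{s_{ij}}{4},$$ where $b_i'$ is the truthful strategy of $i$ ($b'_{i\ell}(t)=v_{i\ell}$ for all feasible askers $\ell$ and all $t$) and $a_j'$ is the truthful strategy of $j$ ($a'_{j\ell}(t)=c_{j\ell}$ for all feasible bidders $\ell$ and all $t$).
   Context: Bipartite setting: bidders and askers; bidder $i$ has value $v_{i\ell}\in\mathbb R$ for matching asker $\ell$ and asker $j$ has cost $c_{j\ell}\in\mathbb R$ for matching bidder $\ell$; surplus $s_{ij}=v_{ij}-c_{ji}$. $1/4$-rebate Marshallian Match: a global price $p(t)$ decreases continuously with $p(0)=+\infty$, $p(1)=0$. Each unmatched bidder $i$ maintains a bid $b_{i\ell}(t)\in\mathbb R$ on each feasible asker $\ell$, and each unmatched asker $j$ an ask $a_{j\ell}(t)\in\mathbb R$ on each feasible bidder $\ell$. No agent sees others' bids/asks; the only information received is being matched. As soon as an unmatched bidder $i$ and asker $j$ satisfy $b_{ij}(t)-a_{ji}(t)\ge p(t)$, they are matched and leave; the bidder pays $b_{ij}$, the asker receives $a_{ji}$, and each receives a rebate $(b_{ij}-a_{ji})/4$. Thus the bidder's utility is $v_{ij}-b_{ij}+(b_{ij}-a_{ji})/4$ and the asker's is $a_{ji}-c_{ji}+(b_{ij}-a_{ji})/4$; unmatched agents get $0$. $(b_{-i},a_{-j},b_i',a_j')$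 denotes the profile where $i$ and $j$ switch to $b_i'$, $a_j'$ and all others keep their strategies. *)

theory Defs
  imports "HOL-Analysis.Analysis"
begin

(* Bidders have type 'b, askers type 'a.  E :: ('b \<times> 'a) set is the set of feasible
   bidder-asker pairs.  A bid strategy b i l t is bidder i's bid on asker l at time t;
   an ask strategy a j l t is asker j's ask on bidder l at time t. *)

definition price_clock :: "(real \<Rightarrow> real) \<Rightarrow> bool" where
  "price_clock p \<longleftrightarrow>
     continuous_on {0<..1} p \<and>
     strict_antimono_on {0<..1} p \<and>
     p 1 = 0 \<and>
     filterlim p at_top (at_right 0)"

definition is_matching :: "('b \<times> 'a) set \<Rightarrow> ('b \<times> 'a) set \<Rightarrow> bool" where
  "is_matching E M \<longleftrightarrow> M \<subseteq> E \<and>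
     (\<forall>i j i' j'. (i, j) \<in> M \<longrightarrow> (i', j') \<in> M \<longrightarrow> (i = i' \<longleftrightarrow> j = j'))"

text \<open>A realization of the Marshallian Match under profile (b,a): a matching M
  together with matching times \<tau>.  Ties among simultaneous matches are resolved arbitrarily.\<close>
definition realization ::
  "(real \<Rightarrow> real) \<Rightarrow> ('b \<times> 'a) set \<Rightarrow> ('b \<Rightarrow> 'a \<Rightarrow> real \<Rightarrow> real) \<Rightarrow>
   ('a \<Rightarrow> 'b \<Rightarrow> real \<Rightarrow> real) \<Rightarrow> ('b \<times> 'a) set \<Rightarrow> ('b \<times> 'a \<Rightarrow> real) \<Rightarrow> bool" where
  "realization p E b a M \<tau> \<longleftrightarrow>
     is_matching E M \<and>
     (\<forall>i j. (i, j) \<in> M \<longrightarrow> \<tau> (i, j) \<in> {0<..1} \<and>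
        b i j (\<tau> (i, j)) - a j i (\<tau> (i, j)) \<ge> p (\<tau> (i, j))) \<and>
     (\<forall>i j t. (i, j) \<in> E \<longrightarrow> t \<in> {0<..1} \<longrightarrow> b i j t - a j i t \<ge> p t \<longrightarrow>
        (\<exists>i' j'. (i', j') \<in> M \<and> (i' = i \<or> j' = j) \<and> \<tau> (i', j') \<le> t))"

definition bidder_util ::
  "('b \<Rightarrow> 'a \<Rightarrow> real) \<Rightarrow> ('b \<Rightarrow> 'a \<Rightarrow> real \<Rightarrow> real) \<Rightarrow> ('a \<Rightarrow> 'b \<Rightarrow> real \<Rightarrow> real) \<Rightarrow>
   ('b \<times> 'a) set \<Rightarrow> ('b \<times> 'a \<Rightarrow> real) \<Rightarrow> 'b \<Rightarrow> real" where
  "bidder_util v b a M \<tau> i =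
     (if \<exists>j. (i, j) \<in> M then
        (let j = (THE j. (i, j) \<in> M); t = \<tau> (i, j)
         in v i j - b i j t + (b i j t - a j i t) / 4)
      else 0)"

definition asker_util ::
  "('a \<Rightarrow> 'b \<Rightarrow> real) \<Rightarrow> ('b \<Rightarrow> 'a \<Rightarrow> real \<Rightarrow> real) \<Rightarrow> ('a \<Rightarrow> 'b \<Rightarrow> real \<Rightarrow> real) \<Rightarrow>
   ('b \<times> 'a) set \<Rightarrow> ('b \<times> 'a \<Rightarrow> real) \<Rightarrow> 'a \<Rightarrow> real" where
  "asker_util c b a M \<tau> j =
     (if \<exists>i. (i, j) \<in> M then
        (let i = (THE i. (i, j) \<in> M); t = \<tau> (i, j)
         in a j i t - c j i + (b i j t - a j i t) / 4)
      else 0)"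

end

theory Submission
  imports Defs
begin

text \<open>A truthful agent's utility is a quarter of the surplus of the pair it ends up in, and
  every matched pair has surplus at least the price at its matching time, so a truthful
  agent never loses.  If the truthful pair \<open>(i, j)\<close> has positive surplus \<open>s\<close>, the price
  reaches \<open>s\<close> at some time \<open>t\<close>; at that moment \<open>i\<close> and \<open>j\<close> meet the matching condition, so
  one of them has already been matched, at a time when the price was at least \<open>s\<close>.\<close>

lemma price_clock_antimono:
  assumes "price_clock p" "x \<in> {0<..1}" "y \<in> {0<..1}" "x \<le> y"
  shows "p y \<le> p x"
proof (cases "x = y")
  case False
  with assms show ?thesis
    unfolding price_clock_def monotone_on_def by fastforce
qed simp

lemma price_clock_nonneg:
  assumes "price_clock p" "t \<in> {0<..1}"
  shows "0 \<le> p t"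
  using price_clock_antimono[OF assms, of 1] assms by (auto simp: price_clock_def)

lemma price_clock_attains:
  assumes "price_clock p" "0 \<le> s"
  obtains t where "t \<in> {0<..1}" "p t = s"
proof -
  have "\<forall>\<^sub>F x in at_right 0. s < p x \<and> x < 1 \<and> 0 < x"
  proof (intro eventually_conj)
    show "\<forall>\<^sub>F x in at_right 0. s < p x"
      using assms(1) by (auto simp: price_clock_def filterlim_at_top_dense)
    show "\<forall>\<^sub>F x in at_right 0. x < (1::real)"
      by (rule eventually_at_rightI[of _ 1]) auto
  qed (rule eventually_at_right_less)
  then obtain t0 where t0: "s < p t0" "t0 < 1" "0 < t0"
    using eventually_happens'[of "at_right (0::real)"] by auto
  have "continuous_on {t0..1} p"
    using assms(1) t0 by (auto simp: price_clock_def intro: continuous_on_subset)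
  moreover have "p 1 \<le> s"
    using assms by (simp add: price_clock_def)
  ultimately obtain t where "t0 \<le> t" "t \<le> 1" "p t = s"
    using IVT2'[of p 1 s t0] t0 by force
  with t0 show ?thesis by (intro that[of t]) auto
qed

lemma is_matching_the_asker:
  assumes "is_matching E M" "(i, j) \<in> M"
  shows "(THE j. (i, j) \<in> M) = j"
  using assms unfolding is_matching_def by blast

lemma is_matching_the_bidder:
  assumes "is_matching E M" "(i, j) \<in> M"
  shows "(THE i. (i, j) \<in> M) = i"
  using assms unfolding is_matching_def by blast

lemma realization_matched_pair:
  assumes "realization p E b a M \<tau>" "(i, j) \<in> M"
  shows "\<tau> (i, j) \<in> {0<..1}" "p (\<tau> (i, j)) \<le> b i j (\<tau> (i, j)) - a j i (\<tau> (i, j))"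
  using assms by (auto simp: realization_def)

lemma truthful_bidder_util_ge_price:
  assumes "realization p E b a M \<tau>" "b i = (\<lambda>l t. v i l)" "(i, l) \<in> M"
  shows "p (\<tau> (i, l)) / 4 \<le> bidder_util v b a M \<tau> i"
proof -
  have "is_matching E M"
    using assms(1) by (simp add: realization_def)
  then have "bidder_util v b a M \<tau> i = (v i l - a l i (\<tau> (i, l))) / 4"
    using assms(2,3) by (auto simp: bidder_util_def Let_def is_matching_the_asker)
  with realization_matched_pair(2)[OF assms(1,3)] assms(2) show ?thesis
    by simp
qed

lemma truthful_asker_util_ge_price:
  assumes "realization p E b a M \<tau>" "a j = (\<lambda>l t. c j l)" "(l, j) \<in> M"
  shows "p (\<tau> (l, j)) / 4 \<le> asker_util c b a M \<tau> j"
proof -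
  have "is_matching E M"
    using assms(1) by (simp add: realization_def)
  then have "asker_util c b a M \<tau> j = (b l j (\<tau> (l, j)) - c j l) / 4"
    using assms(2,3) by (auto simp: asker_util_def Let_def is_matching_the_bidder)
  with realization_matched_pair(2)[OF assms(1,3)] assms(2) show ?thesis
    by simp
qed

lemma truthful_bidder_util_nonneg:
  assumes "price_clock p" "realization p E b a M \<tau>" "b i = (\<lambda>l t. v i l)"
  shows "0 \<le> bidder_util v b a M \<tau> i"
proof (cases "\<exists>l. (i, l) \<in> M")
  case True
  then obtain l where l: "(i, l) \<in> M" ..
  have "0 \<le> p (\<tau> (i, l))"
    using price_clock_nonneg[OF assms(1) realization_matched_pair(1)[OF assms(2) l]] .
  with truthful_bidder_util_ge_price[where v = v, OF assms(2,3) l] show ?thesis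
    by linarith
qed (simp add: bidder_util_def)

lemma truthful_asker_util_nonneg:
  assumes "price_clock p" "realization p E b a M \<tau>" "a j = (\<lambda>l t. c j l)"
  shows "0 \<le> asker_util c b a M \<tau> j"
proof (cases "\<exists>l. (l, j) \<in> M")
  case True
  then obtain l where l: "(l, j) \<in> M" ..
  have "0 \<le> p (\<tau> (l, j))"
    using price_clock_nonneg[OF assms(1) realization_matched_pair(1)[OF assms(2) l]] .
  with truthful_asker_util_ge_price[where c = c, OF assms(2,3) l] show ?thesis
    by linarith
qed (simp add: asker_util_def)

lemma truthful_pair_matched_at_high_price:
  assumes "price_clock p" "realization p E b a M \<tau>" "(i, j) \<in> E"
    and "b i = (\<lambda>l t. v i l)" "a j = (\<lambda>l t. c j l)" "0 \<le> v i j - c j i"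
  obtains i' j' where "(i', j') \<in> M" "i' = i \<or> j' = j" "v i j - c j i \<le> p (\<tau> (i', j'))"
proof -
  obtain t where t: "t \<in> {0<..1}" "p t = v i j - c j i"
    using price_clock_attains[OF assms(1,6)] .
  then have "p t \<le> b i j t - a j i t"
    using assms(4,5) by simp
  then obtain i' j' where m: "(i', j') \<in> M" "i' = i \<or> j' = j" "\<tau> (i', j') \<le> t"
    using assms(2,3) t(1) unfolding realization_def by blast
  have "p t \<le> p (\<tau> (i', j'))"
    using price_clock_antimono[OF assms(1) realization_matched_pair(1)[OF assms(2) m(1)] t(1) m(3)] .
  with m t(2) that show ?thesis by simp
qed

theorem mainTheorem12:
  fixes p :: "real \<Rightarrow> real"
    and E :: "('b \<times> 'a) set"
    and v :: "'b \<Rightarrow> 'a \<Rightarrow> real" and c :: "'a \<Rightarrow> 'b \<Rightarrow> real"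
    and b :: "'b \<Rightarrow> 'a \<Rightarrow> real \<Rightarrow> real" and a :: "'a \<Rightarrow> 'b \<Rightarrow> real \<Rightarrow> real"
    and M :: "('b \<times> 'a) set" and \<tau> :: "'b \<times> 'a \<Rightarrow> real"
    and i :: 'b and j :: 'a
  assumes "price_clock p"
    and "(i, j) \<in> E"
    and "realization p E (b(i := (\<lambda>l t. v i l))) (a(j := (\<lambda>l t. c j l))) M \<tau>"
  shows "bidder_util v (b(i := (\<lambda>l t. v i l))) (a(j := (\<lambda>l t. c j l))) M \<tau> i
         + asker_util c (b(i := (\<lambda>l t. v i l))) (a(j := (\<lambda>l t. c j l))) M \<tau> j
         \<ge> (v i j - c j i) / 4"
proof -
  define b' where "b' = b(i := (\<lambda>l t. v i l))"
  define a' where "a' = a(j := (\<lambda>l t. c j l))"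
  have R: "realization p E b' a' M \<tau>"
    and bi: "b' i = (\<lambda>l t. v i l)" and aj: "a' j = (\<lambda>l t. c j l)"
    using assms(3) by (simp_all add: b'_def a'_def)
  note nonneg = truthful_bidder_util_nonneg[where v = v, OF assms(1) R bi]
    truthful_asker_util_nonneg[where c = c, OF assms(1) R aj]
  have "(v i j - c j i) / 4 \<le> bidder_util v b' a' M \<tau> i + asker_util c b' a' M \<tau> j"
  proof (cases "0 \<le> v i j - c j i")
    case True
    then obtain i' j' where
      "(i', j') \<in> M" "i' = i \<or> j' = j" "v i j - c j i \<le> p (\<tau> (i', j'))"
      using truthful_pair_matched_at_high_price[where v = v and c = c, OF assms(1) R assms(2) bi aj]
      by blast
    then show ?thesis
      using nonneg truthful_bidder_util_ge_price[where v = v, OF R bi, of j']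
        truthful_asker_util_ge_price[where c = c, OF R aj, of i']
      by force
  next
    case False
    then show ?thesis using nonneg by simp
  qed
  then show ?thesis
    by (simp add: b'_def a'_def)
qed

end
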